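(* Let $Q$ be a finite loop and $S$ a subloop of $Q$. For $x\in Q$ let $O_x(Q,S)$ denote the orbit of $x$ under the permutation group $\langle R_s : s\in S\rangle$ acting naturally on $Q$, where $R_s:Q\to Q$, $y\mapsto ys$. (i) If $|O_x(Q,S)|$ is a multiple of $|S|$ for every $x\in Q$, then $|S|$ divides $|Q|$. (ii) If $O_x(Q,S)$ can be written as a disjoint union of left cosets of $S$ for every $x\in Q$, then $Q$ has a left coset partition modulo $S$, i.e., there is a subset of the left cosets $\{yS: y\in Q\}$ that partitions $Q$.
   Context: For $y\in Q$, $yS=\{ys:s\in S\}$ is the left coset of $S$ with representative $y$. *)

theory Defs
  imports Main
begin

definition loop :: "'a set \<Rightarrow> ('a \<Rightarrow> 'a \<Rightarrow> 'a) \<Rightarrow> 'a \<Rightarrow> bool" where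
  "loop Q mult e \<longleftrightarrow>
     e \<in> Q \<and>
     (\<forall>x\<in>Q. \<forall>y\<in>Q. mult x y \<in> Q) \<and>
     (\<forall>x\<in>Q. mult e x = x \<and> mult x e = x) \<and>
     (\<forall>a\<in>Q. \<forall>b\<in>Q. \<exists>!x. x \<in> Q \<and> mult a x = b) \<and>
     (\<forall>a\<in>Q. \<forall>b\<in>Q. \<exists>!y. y \<in> Q \<and> mult y a = b)"

definition subloop :: "'a set \<Rightarrow> 'a set \<Rightarrow> ('a \<Rightarrow> 'a \<Rightarrow> 'a) \<Rightarrow> 'a \<Rightarrow> bool" where
  "subloop S Q mult e \<longleftrightarrow> S \<subseteq> Q \<and> loop S mult e"

definition rdiv :: "'a set \<Rightarrow> ('a \<Rightarrow> 'a \<Rightarrow> 'a) \<Rightarrow> 'a \<Rightarrow> 'a \<Rightarrow> 'a" where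
  "rdiv Q mult b a = (THE y. y \<in> Q \<and> mult y a = b)"

text \<open>Orbit of x under the permutation group generated by the right translations
  R_s (s in S) acting on Q: closure of {x} under all R_s and their inverses.\<close>
inductive_set orbit :: "'a set \<Rightarrow> 'a set \<Rightarrow> ('a \<Rightarrow> 'a \<Rightarrow> 'a) \<Rightarrow> 'a \<Rightarrow> 'a set"
  for Q S mult x where
  base: "x \<in> orbit Q S mult x"
| right: "y \<in> orbit Q S mult x \<Longrightarrow> s \<in> S \<Longrightarrow> mult y s \<in> orbit Q S mult x"
| right_inv: "y \<in> orbit Q S mult x \<Longrightarrow> s \<in> S \<Longrightarrow> rdiv Q mult y s \<in> orbit Q S mult x"

definition lcoset :: "('a \<Rightarrow> 'a \<Rightarrow> 'a) \<Rightarrow> 'a \<Rightarrow> 'a set \<Rightarrow> 'a set" where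
  "lcoset mult y S = (\<lambda>s. mult y s) ` S"

definition lcosets :: "'a set \<Rightarrow> 'a set \<Rightarrow> ('a \<Rightarrow> 'a \<Rightarrow> 'a) \<Rightarrow> 'a set set" where
  "lcosets Q S mult = {lcoset mult y S | y. y \<in> Q}"

end

theory Submission
  imports Defs
begin

text \<open>The orbits of the group generated by the right translations \<open>R\<^sub>s\<close> partition \<open>Q\<close>.
  Part (i) follows because the cardinality of \<open>Q\<close> is the sum of the orbit sizes, and part (ii)
  because coset partitions of the individual orbits combine into one of \<open>Q\<close>.\<close>

lemma dvd_card_Union_disjoint:
  assumes "finite (\<Union>P)" and "pairwise disjnt P" and "\<And>A. A \<in> P \<Longrightarrow> n dvd card A"
  shows "n dvd card (\<Union>P)"
proof -
  have "\<And>A. A \<in> P \<Longrightarrow> finite A"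
    using assms(1) by (meson Union_upper finite_subset)
  then have "card (\<Union>P) = (\<Sum>A\<in>P. card A)"
    using card_Union_disjoint[OF assms(2)] by blast
  then show ?thesis
    using assms(3) by (simp add: dvd_sum)
qed

lemma pairwise_disjnt_refine:
  assumes disj: "pairwise disjnt P"
    and refine: "\<And>A. A \<in> P \<Longrightarrow> \<exists>C. C \<subseteq> F \<and> pairwise disjnt C \<and> \<Union>C = A"
  shows "\<exists>R. R \<subseteq> F \<and> pairwise disjnt R \<and> \<Union>R = \<Union>P"
proof -
  have "\<forall>A\<in>P. \<exists>C. C \<subseteq> F \<and> pairwise disjnt C \<and> \<Union>C = A"
    using refine by blast
  then obtain C where C: "\<forall>A\<in>P. C A \<subseteq> F \<and> pairwise disjnt (C A) \<and> \<Union>(C A) = A"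
    by (rule bchoice[THEN exE])
  have "pairwise disjnt (\<Union>A\<in>P. C A)"
  proof (rule pairwiseI)
    fix X Y assume "X \<in> (\<Union>A\<in>P. C A)" "Y \<in> (\<Union>A\<in>P. C A)" "X \<noteq> Y"
    then obtain A B where AB: "A \<in> P" "B \<in> P" "X \<in> C A" "Y \<in> C B"
      by blast
    show "disjnt X Y"
    proof (cases "A = B")
      case True
      have "pairwise disjnt (C A)"
        using C AB(1) by blast
      then show ?thesis
        using AB(3,4) True \<open>X \<noteq> Y\<close> by (simp add: pairwiseD)
    next
      case False
      have "\<Union>(C A) = A" "\<Union>(C B) = B"
        using C AB(1,2) by blast+
      then have "X \<subseteq> A" "Y \<subseteq> B"
        using AB(3,4) by blast+
      moreover have "disjnt A B"
        using disj AB(1,2) False by (simp add: pairwiseD)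
      ultimately show ?thesis
        unfolding disjnt_def by blast
    qed
  qed
  moreover have "\<Union>(\<Union>A\<in>P. C A) = \<Union>P"
  proof -
    have "\<Union>(\<Union>A\<in>P. C A) = (\<Union>A\<in>P. \<Union>(C A))"
      by blast
    then show ?thesis
      using C by simp
  qed
  moreover have "(\<Union>A\<in>P. C A) \<subseteq> F"
    using C by blast
  ultimately show ?thesis
    by blast
qed

lemma loop_mult_closed:
  "loop Q mult e \<Longrightarrow> x \<in> Q \<Longrightarrow> y \<in> Q \<Longrightarrow> mult x y \<in> Q"
  unfolding loop_def by simp

lemma loop_right_div_unique:
  "loop Q mult e \<Longrightarrow> a \<in> Q \<Longrightarrow> b \<in> Q \<Longrightarrow> \<exists>!y. y \<in> Q \<and> mult y a = b"
  unfolding loop_def by simp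

lemma rdiv_spec:
  assumes "loop Q mult e" "a \<in> Q" "b \<in> Q"
  shows "rdiv Q mult b a \<in> Q \<and> mult (rdiv Q mult b a) a = b"
  unfolding rdiv_def by (rule theI') (rule loop_right_div_unique[OF assms])

lemma rdiv_mult:
  assumes "loop Q mult e" "a \<in> Q" "y \<in> Q"
  shows "rdiv Q mult (mult y a) a = y"
  unfolding rdiv_def
  by (rule the1_equality[OF loop_right_div_unique[OF assms(1,2) loop_mult_closed[OF assms(1,3,2)]]])
    (simp add: assms(3))

lemma orbit_subset:
  assumes L: "loop Q mult e" and SQ: "S \<subseteq> Q" and "x \<in> Q"
  shows "orbit Q S mult x \<subseteq> Q"
proof
  fix y assume "y \<in> orbit Q S mult x"
  then show "y \<in> Q"
  proof induct
    case base
    show ?case by fact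
  next
    case (right y s)
    then show ?case using SQ loop_mult_closed[OF L] by (meson subsetD)
  next
    case (right_inv y s)
    then show ?case using SQ rdiv_spec[OF L] by (meson subsetD)
  qed
qed

lemma orbit_trans:
  "z \<in> orbit Q S mult y \<Longrightarrow> y \<in> orbit Q S mult x \<Longrightarrow> z \<in> orbit Q S mult x"
  by (induct rule: orbit.induct) (auto intro: orbit.intros)

lemma orbit_sym:
  assumes L: "loop Q mult e" and SQ: "S \<subseteq> Q" and "x \<in> Q"
    and "y \<in> orbit Q S mult x"
  shows "x \<in> orbit Q S mult y"
  using \<open>y \<in> orbit Q S mult x\<close>
proof induct
  case base
  show ?case by (rule orbit.base)
next
  case (right y s)
  have "y \<in> Q" "s \<in> Q"
    using orbit_subset[OF L SQ \<open>x \<in> Q\<close>] right SQ by blast+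
  have "rdiv Q mult (mult y s) s \<in> orbit Q S mult (mult y s)"
    by (rule orbit.right_inv[OF orbit.base \<open>s \<in> S\<close>])
  then have "y \<in> orbit Q S mult (mult y s)"
    by (simp only: rdiv_mult[OF L \<open>s \<in> Q\<close> \<open>y \<in> Q\<close>])
  then show ?case
    by (rule orbit_trans[OF right(2)])
next
  case (right_inv y s)
  have "y \<in> Q" "s \<in> Q"
    using orbit_subset[OF L SQ \<open>x \<in> Q\<close>] right_inv SQ by blast+
  have "mult (rdiv Q mult y s) s \<in> orbit Q S mult (rdiv Q mult y s)"
    by (rule orbit.right[OF orbit.base \<open>s \<in> S\<close>])
  then have "y \<in> orbit Q S mult (rdiv Q mult y s)"
    by (simp only: rdiv_spec[OF L \<open>s \<in> Q\<close> \<open>y \<in> Q\<close>])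
  then show ?case
    by (rule orbit_trans[OF right_inv(2)])
qed

lemma orbit_eq:
  assumes "loop Q mult e" "S \<subseteq> Q" "x \<in> Q" "y \<in> orbit Q S mult x"
  shows "orbit Q S mult y = orbit Q S mult x"
proof (rule subset_antisym; rule subsetI)
  fix z
  show "z \<in> orbit Q S mult y \<Longrightarrow> z \<in> orbit Q S mult x"
    by (erule orbit_trans[OF _ assms(4)])
  show "z \<in> orbit Q S mult x \<Longrightarrow> z \<in> orbit Q S mult y"
    by (erule orbit_trans[OF _ orbit_sym[OF assms]])
qed

lemma orbits_partition:
  assumes "loop Q mult e" "S \<subseteq> Q"
  shows "pairwise disjnt (orbit Q S mult ` Q)" and "\<Union>(orbit Q S mult ` Q) = Q"
proof -
  show "pairwise disjnt (orbit Q S mult ` Q)"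
  proof (rule pairwiseI)
    fix A B assume "A \<in> orbit Q S mult ` Q" "B \<in> orbit Q S mult ` Q" "A \<noteq> B"
    then obtain x y where "x \<in> Q" "y \<in> Q" and A: "A = orbit Q S mult x" and B: "B = orbit Q S mult y"
      by blast
    have "z \<notin> B" if "z \<in> A" for z
    proof
      assume "z \<in> B"
      then have "B = orbit Q S mult z"
        using orbit_eq[OF assms \<open>y \<in> Q\<close>] B by simp
      also have "\<dots> = A"
        using orbit_eq[OF assms \<open>x \<in> Q\<close>] A \<open>z \<in> A\<close> by simp
      finally show False
        using \<open>A \<noteq> B\<close> by simp
    qed
    then show "disjnt A B"
      unfolding disjnt_def by blast
  qed
  show "\<Union>(orbit Q S mult ` Q) = Q"
  proof
    show "\<Union>(orbit Q S mult ` Q) \<subseteq> Q"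
      using orbit_subset[OF assms] by (rule UN_least)
    show "Q \<subseteq> \<Union>(orbit Q S mult ` Q)"
    proof
      fix x assume "x \<in> Q"
      then show "x \<in> \<Union>(orbit Q S mult ` Q)"
        using orbit.base by (rule UN_I)
    qed
  qed
qed

theorem lemma5p3:
  fixes Q S :: "'a set" and mult :: "'a \<Rightarrow> 'a \<Rightarrow> 'a" and e :: 'a
  assumes "loop Q mult e" and "finite Q" and "subloop S Q mult e"
  shows "((\<forall>x\<in>Q. card S dvd card (orbit Q S mult x)) \<longrightarrow> card S dvd card Q)
       \<and> ((\<forall>x\<in>Q. \<exists>C. C \<subseteq> lcosets Q S mult \<and> pairwise disjnt C \<and> \<Union>C = orbit Q S mult x)
            \<longrightarrow> (\<exists>P. P \<subseteq> lcosets Q S mult \<and> pairwise disjnt P \<and> \<Union>P = Q))"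
proof -
  have "S \<subseteq> Q"
    using assms(3) by (simp add: subloop_def)
  note orbits = orbits_partition[OF assms(1) this]
  have "card S dvd card Q" if "\<forall>x\<in>Q. card S dvd card (orbit Q S mult x)"
  proof -
    have "card S dvd card (\<Union>(orbit Q S mult ` Q))"
      using assms(2) orbits that by (intro dvd_card_Union_disjoint) auto
    then show ?thesis
      using orbits(2) by simp
  qed
  moreover have "\<exists>P. P \<subseteq> lcosets Q S mult \<and> pairwise disjnt P \<and> \<Union>P = Q"
    if "\<forall>x\<in>Q. \<exists>C. C \<subseteq> lcosets Q S mult \<and> pairwise disjnt C \<and> \<Union>C = orbit Q S mult x"
  proof -
    have "\<exists>P. P \<subseteq> lcosets Q S mult \<and> pairwise disjnt P \<and> \<Union>P = \<Union>(orbit Q S mult ` Q)"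
      using orbits(1) by (rule pairwise_disjnt_refine) (use that in blast)
    then show ?thesis
      using orbits(2) by simp
  qed
  ultimately show ?thesis
    by blast
qed

end
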